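(* There exists a set of $510$ unit vectors in $\mathbb{R}^{10}$ such that the inner product of any two distinct vectors lies in $\{0,\pm\tfrac16,\pm\tfrac14,\pm\tfrac13,\pm\tfrac12,-1\}$. In particular the kissing number in dimension $10$ is at least $510$.
   Context: The kissing number in dimension $d$ is the maximal number of unit vectors in $\mathbb{R}^d$ with pairwise inner products at most $1/2$. *)

theory Defs
  imports "HOL-Analysis.Analysis" "HOL-Library.Extended_Nat"
begin

definition kissing_config :: "('a::euclidean_space) set \<Rightarrow> bool" where
  "kissing_config S \<longleftrightarrow>
     (\<forall>x\<in>S. norm x = 1) \<and> (\<forall>x\<in>S. \<forall>y\<in>S. x \<noteq> y \<longrightarrow> inner x y \<le> 1/2)"

definition kissing_number :: "('a::euclidean_space) itself \<Rightarrow> enat" where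
  "kissing_number _ = Sup {enat (card S) | S :: 'a set. finite S \<and> kissing_config S}"

end

theory Submission
  imports Defs
begin

text \<open>Write \<open>\<omega> = exp(2\<pi>i/3)\<close> and \<open>\<zeta> = 1 + \<omega> = exp(\<pi>i/3)\<close>. The 85 listed vectors of
  \<open>\<int>[\<omega>]\<^sup>6\<close> have squared length 18 and coordinate sum 0; multiplied by the six units \<open>\<zeta>\<^sup>k\<close>
  they give 510 vectors in the sum-zero hyperplane of \<open>\<complex>\<^sup>6\<close>, a real Euclidean space of
  dimension 10, in which we take Helmert coordinates. Since \<open>\<zeta>\<^sup>2 = \<zeta> - 1\<close>, the real inner
  product of \<open>x\<close> and \<open>\<zeta>\<^sup>k y\<close> is one of \<open>\<plusminus>a, \<plusminus>b, \<plusminus>(b - a)\<close>, where \<open>a\<close> and \<open>b\<close> are the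
  values for \<open>k = 0, 1\<close>; so all \<open>510\<^sup>2\<close> inner products are controlled by a computation on
  pairs of representatives.\<close>

definition helmert :: "(nat \<Rightarrow> real) \<Rightarrow> nat \<Rightarrow> real" where
  "helmert u k = ((\<Sum>j<k. u j) - real k * u k) / sqrt (real (k * (k + 1)))"

lemma helmert_mult:
  "helmert u k * helmert v k =
     ((\<Sum>j<k. u j) - real k * u k) * ((\<Sum>j<k. v j) - real k * v k) / (real k * (real k + 1))"
  unfolding helmert_def by (simp add: field_simps)

lemma helmert_inner:
  "(\<Sum>k\<in>{1..<n}. helmert u k * helmert v k) =
     (\<Sum>j<n. u j * v j) - (\<Sum>j<n. u j) * (\<Sum>j<n. v j) / real n"
proof (induction n)
  case 0
  then show ?case by simp
next
  case (Suc n)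
  show ?case
  proof (cases "n = 0")
    case True
    then show ?thesis by simp
  next
    case False
    then have "{1..<Suc n} = insert n {1..<n}" by auto
    then have "(\<Sum>k\<in>{1..<Suc n}. helmert u k * helmert v k) =
       helmert u n * helmert v n + (\<Sum>k\<in>{1..<n}. helmert u k * helmert v k)" by simp
    also have "\<dots> = (\<Sum>j<Suc n. u j * v j) - (\<Sum>j<Suc n. u j) * (\<Sum>j<Suc n. v j) / real (Suc n)"
    proof -
      have "real n > 0" using False by simp
      then have "(U - real n * a) * (V - real n * b) / (real n * (real n + 1))
               = a * b + U * V / real n - (U + a) * (V + b) / (real n + 1)" for U V a b :: real
        by (simp add: field_simps)
      then show ?thesis unfolding Suc.IH unfolding helmert_mult by simp
    qed
    finally show ?thesis .
  qed
qed

text \<open>A pair \<open>(a, b)\<close> stands for \<open>a + b\<omega>\<close>; \<open>eis_form x y\<close> is twice the real part of the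
  Hermitian product \<open>\<Sum> x\<^sub>j conj(y\<^sub>j)\<close>, as \<open>Re \<omega> = -1/2\<close>.\<close>
fun eis_form :: "(int \<times> int) list \<Rightarrow> (int \<times> int) list \<Rightarrow> int" where
  "eis_form ((a, b) # xs) ((c, d) # ys) = 2*a*c + 2*b*d - a*d - b*c + eis_form xs ys"
| "eis_form _ _ = 0"

text \<open>\<open>\<zeta>(a + b\<omega>) = (a - b) + a\<omega>\<close>, using \<open>\<omega>\<^sup>2 = -1 - \<omega>\<close>.\<close>
definition zeta_mult :: "(int \<times> int) list \<Rightarrow> (int \<times> int) list" where
  "zeta_mult = map (\<lambda>(a, b). (a - b, a))"

definition eis_sum_zero :: "nat \<Rightarrow> (int \<times> int) list \<Rightarrow> bool" where
  "eis_sum_zero m x \<longleftrightarrow> length x = m \<and> sum_list (map fst x) = 0 \<and> sum_list (map snd x) = 0"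

lemma eis_form_sym: "eis_form x y = eis_form y x"
  by (induction x y rule: eis_form.induct) (auto simp: algebra_simps)

lemma eis_form_zeta_zeta: "eis_form (zeta_mult x) (zeta_mult y) = eis_form x y"
  by (induction x y rule: eis_form.induct) (auto simp: zeta_mult_def algebra_simps)

lemma eis_form_zeta_sq: "eis_form x (zeta_mult (zeta_mult y)) = eis_form x (zeta_mult y) - eis_form x y"
  by (induction x y rule: eis_form.induct) (auto simp: zeta_mult_def algebra_simps)

lemma eis_form_zeta_self: "2 * eis_form x (zeta_mult x) = eis_form x x"
  by (induction x) (auto simp: zeta_mult_def algebra_simps)

lemma zeta_pow_6: "(zeta_mult ^^ 6) x = x"
  by (induction x) (auto simp: zeta_mult_def eval_nat_numeral)

lemma eis_sum_zero_zeta: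
  assumes "eis_sum_zero m x"
  shows "eis_sum_zero m (zeta_mult x)"
proof -
  have "sum_list (map fst (zeta_mult x)) = sum_list (map fst x) - sum_list (map snd x)"
    and "sum_list (map snd (zeta_mult x)) = sum_list (map fst x)"
    by (induction x) (auto simp: zeta_mult_def)
  with assms show ?thesis
    by (simp add: eis_sum_zero_def zeta_mult_def)
qed

lemma eis_sum_zero_zeta_pow: "eis_sum_zero m x \<Longrightarrow> eis_sum_zero m ((zeta_mult ^^ k) x)"
  by (induction k) (auto simp: eis_sum_zero_zeta)

lemma eis_form_zeta_pow_zeta_pow: "eis_form ((zeta_mult ^^ k) x) ((zeta_mult ^^ k) x) = eis_form x x"
  by (induction k) (auto simp: eis_form_zeta_zeta)

lemma zeta_pow_mod: "(zeta_mult ^^ k) x = (zeta_mult ^^ (k mod 6)) x"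
proof -
  have six: "(zeta_mult ^^ (6 * m)) y = y" for m y
    by (induction m) (simp_all add: funpow_add zeta_pow_6)
  have "(zeta_mult ^^ k) x = (zeta_mult ^^ (6 * (k div 6) + k mod 6)) x"
    by simp
  also have "\<dots> = (zeta_mult ^^ (6 * (k div 6))) ((zeta_mult ^^ (k mod 6)) x)"
    by (simp only: funpow_add o_apply)
  finally show ?thesis by (simp only: six)
qed

text \<open>The adjoint of multiplication by \<open>\<zeta>\<^sup>p\<close> is multiplication by \<open>\<zeta>\<^sup>-\<^sup>p = \<zeta>\<^sup>5\<^sup>p\<close>.\<close>
lemma eis_form_zeta_pow_left:
  "eis_form ((zeta_mult ^^ p) u) v = eis_form u ((zeta_mult ^^ (5 * p)) v)"
proof (induction p arbitrary: v)
  case 0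
  then show ?case by simp
next
  case (Suc p)
  have "eis_form ((zeta_mult ^^ Suc p) u) v =
        eis_form (zeta_mult ((zeta_mult ^^ p) u)) (zeta_mult ((zeta_mult ^^ 5) v))"
    using zeta_pow_6[of v] by (simp add: eval_nat_numeral)
  also have "\<dots> = eis_form u ((zeta_mult ^^ (5 * p)) ((zeta_mult ^^ 5) v))"
    by (simp only: eis_form_zeta_zeta Suc.IH)
  also have "\<dots> = eis_form u ((zeta_mult ^^ (5 * Suc p)) v)"
    by (simp only: mult_Suc_right add.commute[of 5] funpow_add o_apply)
  finally show ?case .
qed

text \<open>The sequence \<open>s\<^sub>k = eis_form u (\<zeta>\<^sup>k w)\<close> satisfies \<open>s\<^sub>k\<^sub>+\<^sub>2 = s\<^sub>k\<^sub>+\<^sub>1 - s\<^sub>k\<close> and has period 6.\<close>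
definition hexagon_values :: "int \<Rightarrow> int \<Rightarrow> int list" where
  "hexagon_values a b = [a, b, b - a, - a, - b, a - b]"

lemma eis_form_zeta_pow:
  "eis_form u ((zeta_mult ^^ k) w) = hexagon_values (eis_form u w) (eis_form u (zeta_mult w)) ! (k mod 6)"
proof -
  have "eis_form u ((zeta_mult ^^ j) w) = hexagon_values (eis_form u w) (eis_form u (zeta_mult w)) ! j"
    if "j < 6" for j
    using that by (auto simp: less_Suc_eq numeral_eq_Suc hexagon_values_def eis_form_zeta_sq)
  then show ?thesis by (simp only: zeta_pow_mod[of k])
qed

lemma eis_form_nth:
  "length x = length y \<Longrightarrow> eis_form x y =
     (\<Sum>j<length x. 2 * fst (x!j) * fst (y!j) + 2 * snd (x!j) * snd (y!j)
                     - fst (x!j) * snd (y!j) - snd (x!j) * fst (y!j))"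
proof (induction x y rule: eis_form.induct)
  case (1 a b xs c d ys)
  then show ?case by (simp del: sum.lessThan_Suc add: sum.lessThan_Suc_shift)
qed auto

text \<open>Real coordinates of \<open>a + b\<omega> = (a - b/2) + (\<surd>3/2 b) i\<close>.\<close>
definition eis_re :: "(int \<times> int) list \<Rightarrow> nat \<Rightarrow> real" where
  "eis_re x j = of_int (fst (x!j)) - of_int (snd (x!j)) / 2"

definition eis_im :: "(int \<times> int) list \<Rightarrow> nat \<Rightarrow> real" where
  "eis_im x j = sqrt 3 / 2 * of_int (snd (x!j))"

text \<open>Helmert coordinates of the real parts followed by those of the imaginary parts: an
  isometry from the sum-zero hyperplane of \<open>\<complex>\<^sup>l\<^sup>+\<^sup>1\<close> onto \<open>\<real>\<^sup>2\<^sup>l\<close>.\<close>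
definition eis_coord :: "nat \<Rightarrow> (int \<times> int) list \<Rightarrow> nat \<Rightarrow> real" where
  "eis_coord l x n = (if n < l then helmert (eis_re x) (n + 1) else helmert (eis_im x) (n - l + 1))"

lemma eis_sum_zero_re_im:
  assumes "eis_sum_zero m x"
  shows "(\<Sum>j<m. eis_re x j) = 0" and "(\<Sum>j<m. eis_im x j) = 0"
proof -
  have "(\<Sum>j<m. of_int (fst (x!j))) = (0::real)" "(\<Sum>j<m. of_int (snd (x!j))) = (0::real)"
    using assms unfolding eis_sum_zero_def
    by (auto simp: sum_list_sum_nth atLeast0LessThan simp flip: of_int_sum)
  then show "(\<Sum>j<m. eis_re x j) = 0" "(\<Sum>j<m. eis_im x j) = 0"
    by (simp_all add: eis_re_def eis_im_def sum_subtractf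
        flip: sum_divide_distrib sum_distrib_left)
qed

lemma eis_coord_inner:
  assumes "eis_sum_zero (Suc l) x" and "eis_sum_zero (Suc l) y"
  shows "(\<Sum>n<2 * l. eis_coord l x n * eis_coord l y n) = of_int (eis_form x y) / 2"
proof -
  have halves: "(\<Sum>n<2 * l. g n) = (\<Sum>n<l. g n) + (\<Sum>n<l. g (n + l))" for g :: "nat \<Rightarrow> real"
    using sum.atLeastLessThan_concat[of 0 l "l + l" g] sum.shift_bounds_nat_ivl[of g 0 l l]
    by (simp add: mult_2 atLeast0LessThan)
  have helmert_shift: "(\<Sum>k\<in>{1..<Suc l}. h k) = (\<Sum>n<l. h (n + 1))" for h :: "nat \<Rightarrow> real"
    using sum.shift_bounds_Suc_ivl[of h 0 l] by (simp add: atLeast0LessThan)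
  have "(\<Sum>n<2 * l. eis_coord l x n * eis_coord l y n) =
        (\<Sum>k\<in>{1..<Suc l}. helmert (eis_re x) k * helmert (eis_re y) k) +
        (\<Sum>k\<in>{1..<Suc l}. helmert (eis_im x) k * helmert (eis_im y) k)"
    unfolding halves helmert_shift by (simp add: eis_coord_def)
  also have "\<dots> = (\<Sum>j<Suc l. eis_re x j * eis_re y j + eis_im x j * eis_im y j)"
    unfolding helmert_inner eis_sum_zero_re_im[OF assms(1)] eis_sum_zero_re_im[OF assms(2)]
    by (simp add: sum.distrib)
  also have "\<dots> = of_int (eis_form x y) / 2"
  proof -
    have pointwise: "eis_re x j * eis_re y j + eis_im x j * eis_im y j =
          of_int (2 * fst (x!j) * fst (y!j) + 2 * snd (x!j) * snd (y!j)
                  - fst (x!j) * snd (y!j) - snd (x!j) * fst (y!j)) / 2" for j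
      by (simp add: eis_re_def eis_im_def field_simps)
    then show ?thesis
      unfolding pointwise using assms
      by (simp add: eis_sum_zero_def eis_form_nth of_int_sum del: sum.lessThan_Suc
          flip: sum_divide_distrib)
  qed
  finally show ?thesis .
qed

lemma ex_vec_embedding:
  "\<exists>E :: (nat \<Rightarrow> real) \<Rightarrow> real^'n. \<forall>f g. inner (E f) (E g) = (\<Sum>i<CARD('n). f i * g i)"
proof -
  obtain h :: "'n \<Rightarrow> nat" where h: "bij_betw h UNIV {..<CARD('n)}"
    using ex_bij_betw_finite_nat[of "UNIV :: 'n set"] by (auto simp: atLeast0LessThan)
  have "inner (\<chi> i. f (h i)) (\<chi> i. g (h i)) = (\<Sum>i<CARD('n). f i * g i)" for f g :: "nat \<Rightarrow> real"
    using sum.reindex_bij_betw[OF h, of "\<lambda>i. f i * g i"] by (simp add: inner_vec_def)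
  then show ?thesis by (intro exI[of _ "\<lambda>f. \<chi> i. f (h i)"]) simp
qed

lemma eis_embedding:
  assumes "CARD('n) = 2 * l"
  shows "\<exists>V :: (int \<times> int) list \<Rightarrow> real^'n. \<forall>x y. eis_sum_zero (Suc l) x \<longrightarrow> eis_sum_zero (Suc l) y \<longrightarrow>
           inner (V x) (V y) = of_int (eis_form x y) / 2"
proof -
  obtain E :: "(nat \<Rightarrow> real) \<Rightarrow> real^'n" where E: "\<And>f g. inner (E f) (E g) = (\<Sum>i<2 * l. f i * g i)"
    using ex_vec_embedding assms by metis
  show ?thesis
    by (rule exI[of _ "\<lambda>x. E (eis_coord l x)"]) (simp add: E eis_coord_inner)
qed

text \<open>Thirty-six times the admissible inner products of two vectors that are not antipodal.\<close>
definition admissible :: "int \<Rightarrow> bool" where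
  "admissible n \<longleftrightarrow> n \<in> {0, 6, -6, 9, -9, 12, -12, 18, -18}"

definition admissible_pair :: "(int \<times> int) list \<Rightarrow> (int \<times> int) list \<Rightarrow> bool" where
  "admissible_pair u w \<longleftrightarrow> admissible (eis_form u w) \<and> admissible (eis_form u (zeta_mult w))
     \<and> admissible (eis_form u (zeta_mult w) - eis_form u w)"

lemma admissible_uminus: "admissible (- n) \<longleftrightarrow> admissible n"
  by (auto simp: admissible_def)

lemma admissible_pair_zeta_pow: "admissible_pair u w \<Longrightarrow> admissible (eis_form u ((zeta_mult ^^ k) w))"
proof -
  let ?a = "eis_form u w" and ?b = "eis_form u (zeta_mult w)"
  assume "admissible_pair u w"
  then have "admissible ?a" "admissible ?b" "admissible (?b - ?a)" "admissible (?a - ?b)"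
    using admissible_uminus[of "?b - ?a"] by (simp_all add: admissible_pair_def)
  then have "list_all admissible (hexagon_values ?a ?b)"
    by (simp add: hexagon_values_def admissible_uminus)
  then show ?thesis
    unfolding eis_form_zeta_pow list_all_length by (simp add: hexagon_values_def)
qed

lemma eis_form_self_zeta_pow:
  assumes "eis_form u u = 36" and "k mod 6 \<noteq> 0"
  shows "eis_form u ((zeta_mult ^^ k) u) \<in> {18, -18, -36}"
proof -
  have "eis_form u (zeta_mult u) = 18" using eis_form_zeta_self[of u] assms(1) by simp
  moreover have "hexagon_values 36 18 ! j \<in> {18, -18, -36}" if "0 < j" "j < 6" for j
    using that by (auto simp: hexagon_values_def less_Suc_eq numeral_eq_Suc)
  ultimately show ?thesis
    using assms unfolding eis_form_zeta_pow by simp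
qed

text \<open>Representatives of the 85 orbits under the unit group \<open>\<langle>\<zeta>\<rangle>\<close>.\<close>
definition kissing_reps :: "(int \<times> int) list list" where
  "kissing_reps = [
   [(- 3, -2),(- 1,2),(1,0),(1,0),(1,0),(1,0)],
   [(- 3, -2),(1,0),(- 1,2),(1,0),(1,0),(1,0)],
   [(- 3, -2),(1,0),(1,0),(- 1,2),(1,0),(1,0)],
   [(- 3, -2),(1,0),(1,0),(1,0),(- 1,2),(1,0)],
   [(- 3, -2),(1,0),(1,0),(1,0),(1,0),(- 1,2)],
   [(- 3,0),(0,0),(0,0),(0,0),(0,0),(3,0)],
   [(- 3,0),(0,0),(0,0),(0,0),(3,0),(0,0)],
   [(- 3,0),(0,0),(0,0),(3,0),(0,0),(0,0)],
   [(- 3,0),(0,0),(3,0),(0,0),(0,0),(0,0)],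
   [(- 3,0),(3,0),(0,0),(0,0),(0,0),(0,0)],
   [(- 2, -3),(0,1),(0,1),(0,1),(0,1),(2, -1)],
   [(- 2, -3),(0,1),(0,1),(0,1),(2, -1),(0,1)],
   [(- 2, -3),(0,1),(0,1),(2, -1),(0,1),(0,1)],
   [(- 2, -3),(0,1),(2, -1),(0,1),(0,1),(0,1)],
   [(- 2, -3),(2, -1),(0,1),(0,1),(0,1),(0,1)],
   [(- 2, -1),(- 2, -1),(1, -1),(1, -1),(1,2),(1,2)],
   [(- 2, -1),(- 2, -1),(1, -1),(1,2),(1, -1),(1,2)],
   [(- 2, -1),(- 2, -1),(1, -1),(1,2),(1,2),(1, -1)],
   [(- 2, -1),(- 2, -1),(1,2),(1, -1),(1, -1),(1,2)],
   [(- 2, -1),(- 2, -1),(1,2),(1, -1),(1,2),(1, -1)],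
   [(- 2, -1),(- 2, -1),(1,2),(1,2),(1, -1),(1, -1)],
   [(- 2, -1),(1, -1),(- 2, -1),(1, -1),(1,2),(1,2)],
   [(- 2, -1),(1, -1),(- 2, -1),(1,2),(1, -1),(1,2)],
   [(- 2, -1),(1, -1),(- 2, -1),(1,2),(1,2),(1, -1)],
   [(- 2, -1),(1, -1),(1, -1),(- 2, -1),(1,2),(1,2)],
   [(- 2, -1),(1, -1),(1, -1),(1,2),(- 2, -1),(1,2)],
   [(- 2, -1),(1, -1),(1, -1),(1,2),(1,2),(- 2, -1)],
   [(- 2, -1),(1, -1),(1,2),(- 2, -1),(1, -1),(1,2)],
   [(- 2, -1),(1, -1),(1,2),(- 2, -1),(1,2),(1, -1)],
   [(- 2, -1),(1, -1),(1,2),(1, -1),(- 2, -1),(1,2)],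
   [(- 2, -1),(1, -1),(1,2),(1, -1),(1,2),(- 2, -1)],
   [(- 2, -1),(1, -1),(1,2),(1,2),(- 2, -1),(1, -1)],
   [(- 2, -1),(1, -1),(1,2),(1,2),(1, -1),(- 2, -1)],
   [(- 2, -1),(1,2),(- 2, -1),(1, -1),(1, -1),(1,2)],
   [(- 2, -1),(1,2),(- 2, -1),(1, -1),(1,2),(1, -1)],
   [(- 2, -1),(1,2),(- 2, -1),(1,2),(1, -1),(1, -1)],
   [(- 2, -1),(1,2),(1, -1),(- 2, -1),(1, -1),(1,2)],
   [(- 2, -1),(1,2),(1, -1),(- 2, -1),(1,2),(1, -1)],
   [(- 2, -1),(1,2),(1, -1),(1, -1),(- 2, -1),(1,2)],
   [(- 2, -1),(1,2),(1, -1),(1, -1),(1,2),(- 2, -1)],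
   [(- 2, -1),(1,2),(1, -1),(1,2),(- 2, -1),(1, -1)],
   [(- 2, -1),(1,2),(1, -1),(1,2),(1, -1),(- 2, -1)],
   [(- 2, -1),(1,2),(1,2),(- 2, -1),(1, -1),(1, -1)],
   [(- 2, -1),(1,2),(1,2),(1, -1),(- 2, -1),(1, -1)],
   [(- 2, -1),(1,2),(1,2),(1, -1),(1, -1),(- 2, -1)],
   [(- 1,0),(- 1,0),(- 1,0),(- 1,0),(1, -2),(3,2)],
   [(- 1,0),(- 1,0),(- 1,0),(- 1,0),(3,2),(1, -2)],
   [(- 1,0),(- 1,0),(- 1,0),(1, -2),(- 1,0),(3,2)],
   [(- 1,0),(- 1,0),(- 1,0),(1, -2),(3,2),(- 1,0)],
   [(- 1,0),(- 1,0),(- 1,0),(3,2),(- 1,0),(1, -2)],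
   [(- 1,0),(- 1,0),(- 1,0),(3,2),(1, -2),(- 1,0)],
   [(- 1,0),(- 1,0),(1, -2),(- 1,0),(- 1,0),(3,2)],
   [(- 1,0),(- 1,0),(1, -2),(- 1,0),(3,2),(- 1,0)],
   [(- 1,0),(- 1,0),(1, -2),(3,2),(- 1,0),(- 1,0)],
   [(- 1,0),(- 1,0),(3,2),(- 1,0),(- 1,0),(1, -2)],
   [(- 1,0),(- 1,0),(3,2),(- 1,0),(1, -2),(- 1,0)],
   [(- 1,0),(- 1,0),(3,2),(1, -2),(- 1,0),(- 1,0)],
   [(- 1,0),(1, -2),(- 1,0),(- 1,0),(- 1,0),(3,2)],
   [(- 1,0),(1, -2),(- 1,0),(- 1,0),(3,2),(- 1,0)],
   [(- 1,0),(1, -2),(- 1,0),(3,2),(- 1,0),(- 1,0)],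
   [(- 1,0),(1, -2),(3,2),(- 1,0),(- 1,0),(- 1,0)],
   [(- 1,0),(3,2),(- 1,0),(- 1,0),(- 1,0),(1, -2)],
   [(- 1,0),(3,2),(- 1,0),(- 1,0),(1, -2),(- 1,0)],
   [(- 1,0),(3,2),(- 1,0),(1, -2),(- 1,0),(- 1,0)],
   [(- 1,0),(3,2),(1, -2),(- 1,0),(- 1,0),(- 1,0)],
   [(- 1,1),(- 1,1),(- 1,1),(1, -1),(1, -1),(1, -1)],
   [(- 1,1),(- 1,1),(1, -1),(- 1,1),(1, -1),(1, -1)],
   [(- 1,1),(- 1,1),(1, -1),(1, -1),(- 1,1),(1, -1)],
   [(- 1,1),(- 1,1),(1, -1),(1, -1),(1, -1),(- 1,1)],
   [(- 1,1),(1, -1),(- 1,1),(- 1,1),(1, -1),(1, -1)],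
   [(- 1,1),(1, -1),(- 1,1),(1, -1),(- 1,1),(1, -1)],
   [(- 1,1),(1, -1),(- 1,1),(1, -1),(1, -1),(- 1,1)],
   [(- 1,1),(1, -1),(1, -1),(- 1,1),(- 1,1),(1, -1)],
   [(- 1,1),(1, -1),(1, -1),(- 1,1),(1, -1),(- 1,1)],
   [(- 1,1),(1, -1),(1, -1),(1, -1),(- 1,1),(- 1,1)],
   [(0,0),(- 3,0),(0,0),(0,0),(0,0),(3,0)],
   [(0,0),(- 3,0),(0,0),(0,0),(3,0),(0,0)],
   [(0,0),(- 3,0),(0,0),(3,0),(0,0),(0,0)],
   [(0,0),(- 3,0),(3,0),(0,0),(0,0),(0,0)],
   [(0,0),(0,0),(- 3,0),(0,0),(0,0),(3,0)],
   [(0,0),(0,0),(- 3,0),(0,0),(3,0),(0,0)],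
   [(0,0),(0,0),(- 3,0),(3,0),(0,0),(0,0)],
   [(0,0),(0,0),(0,0),(- 3,0),(0,0),(3,0)],
   [(0,0),(0,0),(0,0),(- 3,0),(3,0),(0,0)],
   [(0,0),(0,0),(0,0),(0,0),(- 3,0),(3,0)]]"


lemma length_kissing_reps: "length kissing_reps = 85"
  by (simp add: kissing_reps_def)

lemma kissing_reps_norm: "list_all (\<lambda>t. eis_sum_zero 6 t \<and> eis_form t t = 36) kissing_reps"
  by code_simp

lemma kissing_reps_admissible_pairs: "sorted_wrt admissible_pair kissing_reps"
  by code_simp

definition kissing_orbit :: "nat \<times> nat \<Rightarrow> (int \<times> int) list" where
  "kissing_orbit = (\<lambda>(i, p). (zeta_mult ^^ p) (kissing_reps ! i))"

lemma kissing_orbit_norm: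
  assumes "d \<in> {..<85} \<times> {..<6}"
  shows "eis_sum_zero 6 (kissing_orbit d)" and "eis_form (kissing_orbit d) (kissing_orbit d) = 36"
  using assms kissing_reps_norm length_kissing_reps
  by (auto simp: kissing_orbit_def list_all_length eis_sum_zero_zeta_pow eis_form_zeta_pow_zeta_pow)

lemma kissing_orbit_inner:
  assumes "d \<in> {..<85} \<times> {..<6}" and "e \<in> {..<85} \<times> {..<6}" and "d \<noteq> e"
  shows "admissible (eis_form (kissing_orbit d) (kissing_orbit e)) \<or>
         eis_form (kissing_orbit d) (kissing_orbit e) = -36"
proof -
  obtain i p j q where d: "d = (i, p)" "i < 85" "p < 6" and e: "e = (j, q)" "j < 85" "q < 6"
    using assms(1,2) by auto
  have shift: "eis_form (kissing_orbit (i', p')) (kissing_orbit (j', q')) =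
      eis_form (kissing_reps ! i') ((zeta_mult ^^ (5 * p' + q')) (kissing_reps ! j'))" for i' p' j' q'
    by (simp add: kissing_orbit_def eis_form_zeta_pow_left funpow_add)
  consider "i = j" | "i < j" | "j < i" by linarith
  then show ?thesis
  proof cases
    case 1
    with assms(3) d e have "p \<noteq> q" by auto
    with d(3) e(3) have "(5 * p + q) mod 6 \<noteq> 0" by presburger
    moreover have "eis_form (kissing_reps ! i) (kissing_reps ! i) = 36"
      using kissing_reps_norm d(2) length_kissing_reps by (simp add: list_all_length)
    ultimately show ?thesis
      using eis_form_self_zeta_pow shift[of i p j q] d(1) e(1) 1 by (auto simp: admissible_def)
  next
    case 2
    then show ?thesis
      using kissing_reps_admissible_pairs e(2) length_kissing_reps shift[of i p j q] d(1) e(1)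
      by (simp add: sorted_wrt_iff_nth_less admissible_pair_zeta_pow)
  next
    case 3
    then show ?thesis
      using kissing_reps_admissible_pairs d(2) length_kissing_reps shift[of j q i p] d(1) e(1)
        eis_form_sym[of "kissing_orbit d"]
      by (simp add: sorted_wrt_iff_nth_less admissible_pair_zeta_pow)
  qed
qed

lemma inj_on_unit_vectors:
  fixes f :: "'b \<Rightarrow> 'a::real_inner"
  assumes "\<And>d. d \<in> D \<Longrightarrow> norm (f d) = 1"
    and "\<And>d e. d \<in> D \<Longrightarrow> e \<in> D \<Longrightarrow> d \<noteq> e \<Longrightarrow> inner (f d) (f e) \<noteq> 1"
  shows "inj_on f D"
proof (rule inj_onI, rule ccontr)
  fix d e assume "d \<in> D" "e \<in> D" "f d = f e" "d \<noteq> e"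
  then have "inner (f d) (f e) = (norm (f d))\<^sup>2" by (simp add: power2_norm_eq_inner)
  with assms \<open>d \<in> D\<close> \<open>e \<in> D\<close> \<open>d \<noteq> e\<close> show False by simp
qed

lemma kissing_number_ge_card:
  fixes S :: "'a::euclidean_space set"
  shows "finite S \<Longrightarrow> kissing_config S \<Longrightarrow> enat (card S) \<le> kissing_number TYPE('a)"
  unfolding kissing_number_def by (rule Sup_upper) blast

theorem mainTheorem6:
  shows "(\<exists>S :: (real^10) set. finite S \<and> card S = 510 \<and> (\<forall>x\<in>S. norm x = 1) \<and>
            (\<forall>x\<in>S. \<forall>y\<in>S. x \<noteq> y \<longrightarrow>
               inner x y \<in> {0, 1/6, -1/6, 1/4, -1/4, 1/3, -1/3, 1/2, -1/2, -1}))
         \<and> kissing_number TYPE(real^10) \<ge> 510"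
proof -
  let ?D = "{..<85::nat} \<times> {..<6::nat}"
  obtain V :: "(int \<times> int) list \<Rightarrow> real^10" where V: "\<And>x y. eis_sum_zero 6 x \<Longrightarrow> eis_sum_zero 6 y \<Longrightarrow>
      inner (V x) (V y) = of_int (eis_form x y) / 2"
    using eis_embedding[where 'n = 10 and l = 5] by auto
  define f where "f d = (1 / sqrt 18) *\<^sub>R V (kissing_orbit d)" for d
  define A :: "real set" where "A = {0, 1/6, -1/6, 1/4, -1/4, 1/3, -1/3, 1/2, -1/2, -1}"
  have inner_f: "inner (f d) (f e) = of_int (eis_form (kissing_orbit d) (kissing_orbit e)) / 36"
    if "d \<in> ?D" "e \<in> ?D" for d e
    using V[OF kissing_orbit_norm(1)[OF that(1)] kissing_orbit_norm(1)[OF that(2)]]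
    by (simp add: f_def)
  have norm_f: "norm (f d) = 1" if "d \<in> ?D" for d
    using inner_f[OF that that] kissing_orbit_norm(2)[OF that] by (simp add: norm_eq_sqrt_inner)
  have values_f: "inner (f d) (f e) \<in> A" if "d \<in> ?D" "e \<in> ?D" "d \<noteq> e" for d e
    using kissing_orbit_inner[OF that] inner_f[OF that(1,2)] by (auto simp: admissible_def A_def)
  have A_le: "t \<le> 1/2" if "t \<in> A" for t
    using that by (auto simp: A_def)
  have norm_S: "\<forall>x\<in>f ` ?D. norm x = 1"
    using norm_f by blast
  have values_S: "\<forall>x\<in>f ` ?D. \<forall>y\<in>f ` ?D. x \<noteq> y \<longrightarrow> inner x y \<in> A"
    using values_f by (auto simp: image_iff)
  have "inj_on f ?D"
  proof (rule inj_on_unit_vectors)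
    show "norm (f d) = 1" if "d \<in> ?D" for d
      using norm_f that .
    show "inner (f d) (f e) \<noteq> 1" if "d \<in> ?D" "e \<in> ?D" "d \<noteq> e" for d e
      using A_le[OF values_f[OF that]] by simp
  qed
  then have card: "card (f ` ?D) = 510" by (simp add: card_image)
  have "kissing_config (f ` ?D)"
    unfolding kissing_config_def using norm_S values_S A_le by blast
  then have "510 \<le> kissing_number TYPE(real^10)"
    using kissing_number_ge_card[of "f ` ?D"] card by (simp add: numeral_eq_enat)
  moreover have "\<exists>S :: (real^10) set. finite S \<and> card S = 510 \<and> (\<forall>x\<in>S. norm x = 1) \<and>
      (\<forall>x\<in>S. \<forall>y\<in>S. x \<noteq> y \<longrightarrow> inner x y \<in> A)"
    using card norm_S values_S by (intro exI[of _ "f ` ?D"]) simp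
  ultimately show ?thesis
    unfolding A_def by (intro conjI)
qed

end
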